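(* Let $B$ be a finite set with $|B|\ge 2$ and let $f$ be an $\mathsf{A}$-shop on $B$. Then $\langle f\rangle$ contains an $\mathsf{A}$-shop $g$ for which there are an element $b\in B$ and sets $B',B''\subseteq B$ with $B'$ non-empty, such that $\{b\},B',B''$ are pairwise disjoint with union $B$, and (1) $g(b)=B$; (2) $g(x)=\{x\}$ for all $x\in B'$; (3) for every $x\in B''$ there exists $y\in B'$ with $g(x)=\{y\}$.
   Context: A shop on $B$ is a map $f:B\to\mathcal{P}(B)\setminus\{\emptyset\}$ such that every $y\in B$ lies in $f(x)$ for some $x\in B$. An $\mathsf{A}$-shop is a shop $f$ such that $f(b)=B$ for some $b\in B$. The identity shop is $x\mapsto\{x\}$; the composition of shops is $(g\circ f)(x)=\{z:\exists y\ (y\in f(x)\wedge z\in g(y))\}$; a shop $f$ is a sub-shop of $g$ if $f(x)\subseteq g(x)$ for all $x$. A down-she-monoid (DSM) on $B$ is a set of shops on $B$ containing the identity, closed under composition and under taking sub-shops (that are shops). $\langle f\rangle$ denotes the smallest DSM containing $f$. *)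

theory Defs
  imports Main
begin

text \<open>Shops on a carrier set B are represented as functions 'a => 'a set that are
  extensional: they take the value {} outside B.\<close>

definition shop :: "'a set \<Rightarrow> ('a \<Rightarrow> 'a set) \<Rightarrow> bool" where
  "shop B f \<longleftrightarrow> (\<forall>x\<in>B. f x \<subseteq> B \<and> f x \<noteq> {}) \<and> (\<forall>x. x \<notin> B \<longrightarrow> f x = {})
      \<and> (\<forall>y\<in>B. \<exists>x\<in>B. y \<in> f x)"

definition A_shop :: "'a set \<Rightarrow> ('a \<Rightarrow> 'a set) \<Rightarrow> bool" where
  "A_shop B f \<longleftrightarrow> shop B f \<and> (\<exists>b\<in>B. f b = B)"

definition id_shop :: "'a set \<Rightarrow> 'a \<Rightarrow> 'a set" where
  "id_shop B = (\<lambda>x. if x \<in> B then {x} else {})"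

definition shop_comp :: "('a \<Rightarrow> 'a set) \<Rightarrow> ('a \<Rightarrow> 'a set) \<Rightarrow> 'a \<Rightarrow> 'a set" where
  "shop_comp g f = (\<lambda>x. {z. \<exists>y. y \<in> f x \<and> z \<in> g y})"

definition sub_shop :: "('a \<Rightarrow> 'a set) \<Rightarrow> ('a \<Rightarrow> 'a set) \<Rightarrow> bool" where
  "sub_shop f g \<longleftrightarrow> (\<forall>x. f x \<subseteq> g x)"

definition DSM :: "'a set \<Rightarrow> ('a \<Rightarrow> 'a set) set \<Rightarrow> bool" where
  "DSM B M \<longleftrightarrow> (\<forall>f\<in>M. shop B f) \<and> id_shop B \<in> M
     \<and> (\<forall>f\<in>M. \<forall>g\<in>M. shop_comp g f \<in> M)
     \<and> (\<forall>g\<in>M. \<forall>f. shop B f \<and> sub_shop f g \<longrightarrow> f \<in> M)"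

definition gen_DSM :: "'a set \<Rightarrow> ('a \<Rightarrow> 'a set) \<Rightarrow> ('a \<Rightarrow> 'a set) set" where
  "gen_DSM B f = \<Inter>{M. DSM B M \<and> f \<in> M}"

end

theory Submission
  imports Defs
begin

text \<open>First shrink f to a sub-shop h with h b = B and singleton values elsewhere. The powers
  of h take only finitely many values, so some power e is idempotent; its values are B or
  singletons, and idempotence makes every singleton value {y} a fixed point, e y = {y}.
  Keeping b \<mapsto> B, restricting e to the identity on the points x \<noteq> b with x \<in> e x (B'),
  and keeping e elsewhere gives a sub-shop of e with the required shape.\<close>

lemma shop_comp_assoc: "shop_comp a (shop_comp b c) = shop_comp (shop_comp a b) c"
  unfolding shop_comp_def by auto

lemma shop_comp_id_shop_left: "shop B g \<Longrightarrow> shop_comp (id_shop B) g = g"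
  unfolding shop_comp_def id_shop_def shop_def by (rule ext) auto

lemma shop_id_shop: "shop B (id_shop B)"
  unfolding shop_def id_shop_def by auto

lemma shop_shop_comp:
  assumes "shop B g" "shop B f"
  shows "shop B (shop_comp g f)"
proof -
  have "\<exists>z. z \<in> shop_comp g f x" if "x \<in> B" for x
  proof -
    obtain y where "y \<in> f x" "y \<in> B" using assms(2) \<open>x \<in> B\<close> unfolding shop_def by blast
    moreover obtain z where "z \<in> g y" using assms(1) \<open>y \<in> B\<close> unfolding shop_def by blast
    ultimately show ?thesis unfolding shop_comp_def by blast
  qed
  moreover have "\<exists>x\<in>B. z \<in> shop_comp g f x" if "z \<in> B" for z
  proof -
    obtain y where "y \<in> B" "z \<in> g y" using assms(1) \<open>z \<in> B\<close> unfolding shop_def by blast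
    moreover obtain x where "x \<in> B" "y \<in> f x" using assms(2) \<open>y \<in> B\<close> unfolding shop_def by blast
    ultimately show ?thesis unfolding shop_comp_def by blast
  qed
  ultimately show ?thesis
    using assms unfolding shop_def shop_comp_def by blast
qed

lemma DSM_shops: "DSM B {g. shop B g}"
  unfolding DSM_def using shop_id_shop shop_shop_comp by blast

lemma DSM_Inter:
  assumes "\<M> \<noteq> {}" "\<And>M. M \<in> \<M> \<Longrightarrow> DSM B M"
  shows "DSM B (\<Inter>\<M>)"
  unfolding DSM_def
proof (intro conjI ballI allI impI)
  show "shop B g" if "g \<in> \<Inter>\<M>" for g
    using that assms unfolding DSM_def by blast
  show "id_shop B \<in> \<Inter>\<M>"
    using assms(2) unfolding DSM_def by blast
  show "shop_comp g f \<in> \<Inter>\<M>" if "f \<in> \<Inter>\<M>" "g \<in> \<Inter>\<M>" for f g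
    using that assms(2) unfolding DSM_def by blast
  show "k \<in> \<Inter>\<M>" if "g \<in> \<Inter>\<M>" "shop B k \<and> sub_shop k g" for g k
    using that assms(2) unfolding DSM_def by blast
qed

lemma DSM_gen_DSM:
  assumes "shop B f"
  shows "DSM B (gen_DSM B f)"
  unfolding gen_DSM_def using DSM_shops[of B] assms by (intro DSM_Inter) auto

lemma mem_gen_DSM: "shop B f \<Longrightarrow> f \<in> gen_DSM B f"
  unfolding gen_DSM_def using DSM_shops by blast

lemma DSM_id_shop_mem: "DSM B M \<Longrightarrow> id_shop B \<in> M"
  unfolding DSM_def by blast

lemma DSM_shop_comp_mem: "DSM B M \<Longrightarrow> f \<in> M \<Longrightarrow> g \<in> M \<Longrightarrow> shop_comp g f \<in> M"
  unfolding DSM_def by blast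

lemma DSM_sub_shop_mem: "DSM B M \<Longrightarrow> g \<in> M \<Longrightarrow> shop B k \<Longrightarrow> sub_shop k g \<Longrightarrow> k \<in> M"
  unfolding DSM_def by blast

fun shop_pow :: "'a set \<Rightarrow> ('a \<Rightarrow> 'a set) \<Rightarrow> nat \<Rightarrow> 'a \<Rightarrow> 'a set" where
  "shop_pow B h 0 = id_shop B"
| "shop_pow B h (Suc n) = shop_comp h (shop_pow B h n)"

lemma shop_shop_pow: "shop B h \<Longrightarrow> shop B (shop_pow B h n)"
  by (induction n) (auto intro: shop_id_shop shop_shop_comp)

lemma DSM_shop_pow_mem: "DSM B M \<Longrightarrow> h \<in> M \<Longrightarrow> shop_pow B h n \<in> M"
  by (induction n) (simp_all add: DSM_id_shop_mem DSM_shop_comp_mem)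

lemma shop_pow_add:
  assumes "shop B h"
  shows "shop_pow B h (m + n) = shop_comp (shop_pow B h m) (shop_pow B h n)"
  by (induction m) (simp_all add: shop_comp_assoc shop_comp_id_shop_left shop_shop_pow assms)

lemma finite_range_shop_pow:
  assumes "finite B" "shop B h"
  shows "finite (range (shop_pow B h))"
proof -
  have "finite {g. \<forall>x. (x \<in> B \<longrightarrow> g x \<in> Pow B) \<and> (x \<notin> B \<longrightarrow> g x = {})}"
    using assms(1) by (intro finite_set_of_finite_funs) simp_all
  moreover have "range (shop_pow B h) \<subseteq> {g. \<forall>x. (x \<in> B \<longrightarrow> g x \<in> Pow B) \<and> (x \<notin> B \<longrightarrow> g x = {})}"
    using shop_shop_pow[OF assms(2)] unfolding shop_def by blast
  ultimately show ?thesis by (rule finite_subset[rotated])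
qed

lemma shop_pow_periodic:
  assumes "shop B h" "shop_pow B h (i + p) = shop_pow B h i" "i \<le> n"
  shows "shop_pow B h (n + k * p) = shop_pow B h n"
proof (induction k)
  case (Suc k)
  have "shop_pow B h (n + Suc k * p) = shop_pow B h ((n - i + k * p) + (i + p))"
    using assms(3) by (simp add: algebra_simps)
  also have "\<dots> = shop_comp (shop_pow B h (n - i + k * p)) (shop_pow B h i)"
    using shop_pow_add[OF assms(1)] assms(2) by simp
  also have "\<dots> = shop_pow B h (n + k * p)"
    using shop_pow_add[OF assms(1), of "n - i + k * p" i] assms(3) by simp
  finally show ?case using Suc by simp
qed simp

lemma shop_pow_idempotent_exists:
  assumes "finite B" "shop B h"
  obtains n where "n > 0" "shop_comp (shop_pow B h n) (shop_pow B h n) = shop_pow B h n"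
proof -
  have "\<not> inj (shop_pow B h)"
    using finite_range_shop_pow[OF assms] finite_imageD infinite_UNIV_nat by blast
  then obtain i j where ij: "i \<noteq> j" "shop_pow B h i = shop_pow B h j"
    unfolding inj_def by blast
  obtain i p where p: "p > 0" "shop_pow B h (i + p) = shop_pow B h i"
  proof (cases "i < j")
    case True
    then show ?thesis using that[of "j - i" i] ij by simp
  next
    case False
    then show ?thesis using that[of "i - j" j] ij by simp
  qed
  define n where "n = (i + 1) * p"
  have "i \<le> i * p" using p(1) by (cases p) simp_all
  then have "i \<le> n" unfolding n_def by (simp only: distrib_right mult_1)
  then have "shop_pow B h (n + n) = shop_pow B h n"
    using shop_pow_periodic[OF assms(2) p(2), of n "i + 1"] unfolding n_def by simp
  moreover have "n > 0" using p(1) unfolding n_def by simp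
  ultimately show ?thesis
    using that shop_pow_add[OF assms(2)] by simp
qed

lemma sub_shop_pointed_singletons_exists:
  assumes "shop B f" "b \<in> B" "f b = B"
  obtains h where "shop B h" "sub_shop h f" "h b = B" "\<forall>x\<in>B - {b}. \<exists>y. h x = {y}"
proof -
  define h where "h x = (if x = b then B else if x \<in> B then {SOME y. y \<in> f x} else {})" for x
  have some: "(SOME y. y \<in> f x) \<in> f x \<inter> B" if "x \<in> B" for x
    using assms(1) that unfolding shop_def by (metis IntI ex_in_conv someI_ex subsetD)
  have "shop B h" unfolding shop_def h_def using assms(2) some by auto
  moreover have "sub_shop h f" unfolding sub_shop_def h_def using assms(3) some by auto
  ultimately show ?thesis using that h_def by simp
qed

lemma shop_pow_pointed_singletons:
  assumes "shop B h" "b \<in> B" "h b = B" "\<forall>x\<in>B - {b}. \<exists>y. h x = {y}" "x \<in> B"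
  shows "shop_pow B h n x = B \<or> (\<exists>y. shop_pow B h n x = {y})"
proof (induction n)
  case 0
  then show ?case using assms(5) by (simp add: id_shop_def)
next
  case (Suc n)
  then show ?case
  proof
    assume "shop_pow B h n x = B"
    then have "shop_pow B h (Suc n) x = \<Union>(h ` B)" by (auto simp: shop_comp_def)
    also have "\<dots> = B" using assms(1) unfolding shop_def by blast
    finally show ?case by blast
  next
    assume "\<exists>y. shop_pow B h n x = {y}"
    then obtain y where y: "shop_pow B h n x = {y}" by blast
    then have "y \<in> B" using shop_shop_pow[OF assms(1), of n] assms(5) unfolding shop_def by blast
    moreover have "shop_pow B h (Suc n) x = h y" using y by (simp add: shop_comp_def)
    ultimately show ?case using assms(3,4) by (cases "y = b") auto
  qed
qed

lemma shop_pow_Suc_pointed: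
  assumes "shop B h" "b \<in> B" "h b = B"
  shows "shop_pow B h (Suc n) b = B"
proof -
  have "b \<in> shop_pow B h n b"
    by (induction n) (use assms(2,3) in \<open>auto simp: id_shop_def shop_comp_def\<close>)
  then have "B \<subseteq> shop_pow B h (Suc n) b" using assms(3) by (auto simp: shop_comp_def)
  moreover have "shop_pow B h (Suc n) b \<subseteq> B"
    using shop_shop_pow[OF assms(1)] assms(2) unfolding shop_def by blast
  ultimately show ?thesis by blast
qed

lemma pointed_shop_idempotent_power_exists:
  assumes "finite B" "shop B h" "b \<in> B" "h b = B" "\<forall>x\<in>B - {b}. \<exists>y. h x = {y}"
  obtains n where "shop_comp (shop_pow B h n) (shop_pow B h n) = shop_pow B h n"
    "shop_pow B h n b = B" "\<forall>x\<in>B. shop_pow B h n x = B \<or> (\<exists>y. shop_pow B h n x = {y})"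
proof -
  obtain n where n: "n > 0" "shop_comp (shop_pow B h n) (shop_pow B h n) = shop_pow B h n"
    using shop_pow_idempotent_exists[OF assms(1,2)] .
  moreover have "shop_pow B h n b = B"
    using shop_pow_Suc_pointed[OF assms(2-4), of "n - 1"] n(1) by simp
  ultimately show ?thesis
    using that shop_pow_pointed_singletons[OF assms(2-5)] by blast
qed

lemma idempotent_singleton_value_fixed:
  assumes "shop_comp e e = e" "e x = {y}"
  shows "e y = {y}"
  using fun_cong[OF assms(1), of x] assms(2) by (simp add: shop_comp_def)

lemma idempotent_shop_retraction:
  assumes "shop B e" "shop_comp e e = e" "b \<in> B" "e b = B" "d \<in> B" "d \<noteq> b"
    and e_values: "\<forall>x\<in>B. e x = B \<or> (\<exists>y. e x = {y})"
  defines "B' \<equiv> {x \<in> B - {b}. x \<in> e x}"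
  shows "B' \<noteq> {}" and "\<forall>x\<in>B - {b} - B'. \<exists>y\<in>B'. e x = {y}"
proof -
  have fixed_in: "y \<in> B'" if "e x = {y}" for x y
  proof -
    have "e y = {y}" using idempotent_singleton_value_fixed[OF assms(2) that] .
    moreover from this have "y \<in> B" using assms(1) unfolding shop_def by blast
    moreover from calculation have "y \<noteq> b" using assms(4-6) by auto
    ultimately show ?thesis unfolding B'_def by simp
  qed
  show "B' \<noteq> {}"
    using e_values assms(5,6) fixed_in unfolding B'_def by blast
  show "\<forall>x\<in>B - {b} - B'. \<exists>y\<in>B'. e x = {y}"
    using e_values fixed_in unfolding B'_def by blast
qed

lemma idempotent_shop_retract_exists:
  assumes "shop B e" "shop_comp e e = e" "b \<in> B" "e b = B" "d \<in> B" "d \<noteq> b"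
    and "\<forall>x\<in>B. e x = B \<or> (\<exists>y. e x = {y})"
  obtains g B' B'' where "shop B g" "sub_shop g e" "g b = B" "B' \<noteq> {}" "b \<notin> B'" "b \<notin> B''"
    "B' \<inter> B'' = {}" "{b} \<union> B' \<union> B'' = B" "\<forall>x\<in>B'. g x = {x}" "\<forall>x\<in>B''. \<exists>y\<in>B'. g x = {y}"
proof -
  define B' where "B' = {x \<in> B - {b}. x \<in> e x}"
  define g where "g x = (if x = b then B else if x \<in> B' then {x} else e x)" for x
  have B': "B' \<noteq> {}" "\<forall>x\<in>B - {b} - B'. \<exists>y\<in>B'. e x = {y}"
    using idempotent_shop_retraction[OF assms] unfolding B'_def by blast+
  have "shop B g"
    using assms(1,3) unfolding shop_def g_def B'_def by auto
  moreover have "sub_shop g e"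
    using assms(4) unfolding sub_shop_def g_def B'_def by auto
  moreover have "\<forall>x\<in>B'. g x = {x}" unfolding g_def B'_def by auto
  moreover have "\<forall>x\<in>B - {b} - B'. \<exists>y\<in>B'. g x = {y}" using B'(2) unfolding g_def by auto
  moreover have "{b} \<union> B' \<union> (B - {b} - B') = B" "b \<notin> B'"
    using assms(3) unfolding B'_def by auto
  ultimately show ?thesis
    using that[of g B' "B - {b} - B'"] B'(1) unfolding g_def by auto
qed

theorem lemma3p5:
  fixes B :: "'a set" and f :: "'a \<Rightarrow> 'a set"
  assumes "finite B" and "card B \<ge> 2" and "A_shop B f"
  shows "\<exists>g \<in> gen_DSM B f. A_shop B g \<and>
           (\<exists>b B' B''. b \<in> B \<and> B' \<subseteq> B \<and> B'' \<subseteq> B \<and> B' \<noteq> {} \<and>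
              b \<notin> B' \<and> b \<notin> B'' \<and> B' \<inter> B'' = {} \<and> {b} \<union> B' \<union> B'' = B \<and>
              g b = B \<and>
              (\<forall>x\<in>B'. g x = {x}) \<and>
              (\<forall>x\<in>B''. \<exists>y\<in>B'. g x = {y}))"
proof -
  obtain b where b: "b \<in> B" "f b = B" and "shop B f" using assms(3) unfolding A_shop_def by blast
  have DSM: "DSM B (gen_DSM B f)" using DSM_gen_DSM[OF \<open>shop B f\<close>] .
  have "card (B - {b}) \<noteq> 0" using card_Diff_singleton[OF b(1)] assms(2) by simp
  then obtain d where d: "d \<in> B" "d \<noteq> b" by (metis DiffE card.empty ex_in_conv singletonI)
  obtain h where h: "shop B h" "sub_shop h f" "h b = B" "\<forall>x\<in>B - {b}. \<exists>y. h x = {y}"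
    using sub_shop_pointed_singletons_exists[OF \<open>shop B f\<close> b] .
  have "h \<in> gen_DSM B f"
    using DSM_sub_shop_mem[OF DSM mem_gen_DSM[OF \<open>shop B f\<close>] h(1,2)] .
  obtain n where e: "shop_comp (shop_pow B h n) (shop_pow B h n) = shop_pow B h n"
    "shop_pow B h n b = B" "\<forall>x\<in>B. shop_pow B h n x = B \<or> (\<exists>y. shop_pow B h n x = {y})"
    using pointed_shop_idempotent_power_exists[OF assms(1) h(1) b(1) h(3,4)] .
  obtain g B' B'' where g: "shop B g" "sub_shop g (shop_pow B h n)" "g b = B" "B' \<noteq> {}"
    "b \<notin> B'" "b \<notin> B''" "B' \<inter> B'' = {}" "{b} \<union> B' \<union> B'' = B"
    "\<forall>x\<in>B'. g x = {x}" "\<forall>x\<in>B''. \<exists>y\<in>B'. g x = {y}"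
    using idempotent_shop_retract_exists[OF shop_shop_pow[OF h(1)] e(1) b(1) e(2) d e(3)] .
  have "g \<in> gen_DSM B f"
    using DSM_sub_shop_mem[OF DSM DSM_shop_pow_mem[OF DSM \<open>h \<in> gen_DSM B f\<close>] g(1,2)] .
  moreover have "A_shop B g" using g(1,3) b(1) unfolding A_shop_def by blast
  ultimately show ?thesis using g(3-) b(1) by blast
qed

end
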